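(* Consider the constrained nonlinear system $x(k+1)=f(x(k),u(k))$ with $f(0,0)=0$, input constraint $u\in\mathcal{U}=\{u\in\mathbb{R}^m:|u_i|\le\bar u_i,\ i=1,\dots,m\}$ and state constraint $x\in\mathcal{X}$ with $0\in\mathcal{X}$. For a horizon $N\ge1$ and stage cost $l$, let $J(x(k),U(k|k))=\sum_{i=0}^{N-1} l(x(k+i+1|k),u(k+i|k))$ with $x(k|k)=x(k)$, $x(k+i+1|k)=f(x(k+i|k),u(k+i|k))$, and let $J^*(x(k))$ be its minimum over $u(k+i|k)\in\mathcal{U}$ subject to $x(k+i+1|k)\in\mathcal{X}$, $i=0,\dots,N-1$, with optimal controls $u^*(k+i|k)$ and optimal predicted states $x^*(k+i|k)$; the MPC law applies $u(k)=u^*(k|k)$. Define $m(x)=\min_{u\in\mathcal{U}} l(f(x,u),u)$ subject to $f(x,u)\in\mathcal{X}$. Assume there exist $\alpha_1,\alpha_2\in\mathcal{K}_\infty$ with $\alpha_1(\|x\|)\le J^*(x)\le\alpha_2(\|x\|)$ and $\alpha_1(\|x\|)\le m(x)\le\alpha_2(\|x\|)$ for all $x\in\mathcal{X}$. For $\alpha>0$ let $\mathcal{X}_T(\alpha)=\{x\in\mathcal{X}: m(x)\le\alpha\}$. If the optimisation problem is feasible for an initial state $x_0\in\mathcal{X}$ and, at every time $k\ge0$, the optimal terminal state satisfies $x^*(k+N|k)\in\mathcal{X}_T(\alpha)$ with $\alpha=m(x(k))$, then the closed-loop system under the MPC algorithm is recursively feasible and stable.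
   Context: Class $\mathcal{K}$: continuous, strictly increasing functions $\phi:\mathbb{R}_+\to\mathbb{R}_+$ with $\phi(0)=0$; class $\mathcal{K}_\infty$: class $\mathcal{K}$ and radially unbounded. Stability refers to the origin of the closed-loop system. *)

theory Defs
  imports "HOL-Analysis.Analysis" "HOL-Library.Extended_Real"
begin

definition classK :: "(real \<Rightarrow> real) \<Rightarrow> bool" where
  "classK \<phi> \<longleftrightarrow> continuous_on {0..} \<phi> \<and> strict_mono_on {0..} \<phi> \<and> \<phi> 0 = 0
      \<and> (\<forall>r\<ge>0. \<phi> r \<ge> 0)"

definition classKinf :: "(real \<Rightarrow> real) \<Rightarrow> bool" where
  "classKinf \<phi> \<longleftrightarrow> classK \<phi> \<and> filterlim \<phi> at_top at_top"

definition input_box :: "real ^ 'm \<Rightarrow> (real ^ 'm) set" where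
  "input_box ubar = {u. \<forall>i. \<bar>u $ i\<bar> \<le> ubar $ i}"

text \<open>Predicted states x(k+i|k) from x(k|k) = x under inputs us i = u(k+i|k).\<close>
primrec pred_state :: "('x \<Rightarrow> 'u \<Rightarrow> 'x) \<Rightarrow> 'x \<Rightarrow> (nat \<Rightarrow> 'u) \<Rightarrow> nat \<Rightarrow> 'x" where
  "pred_state f x us 0 = x"
| "pred_state f x us (Suc i) = f (pred_state f x us i) (us i)"

definition Jcost :: "('x \<Rightarrow> 'u \<Rightarrow> 'x) \<Rightarrow> ('x \<Rightarrow> 'u \<Rightarrow> real) \<Rightarrow> nat \<Rightarrow> 'x \<Rightarrow> (nat \<Rightarrow> 'u) \<Rightarrow> real" where
  "Jcost f l N x us = (\<Sum>i<N. l (pred_state f x us (Suc i)) (us i))"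

definition mpc_feasible :: "('x \<Rightarrow> 'u \<Rightarrow> 'x) \<Rightarrow> 'u set \<Rightarrow> 'x set \<Rightarrow> nat \<Rightarrow> 'x \<Rightarrow> (nat \<Rightarrow> 'u) \<Rightarrow> bool" where
  "mpc_feasible f U X N x us \<longleftrightarrow> (\<forall>i<N. us i \<in> U \<and> pred_state f x us (Suc i) \<in> X)"

text \<open>Optimal value J*; the infimum over an empty feasible set is \<infinity>.\<close>
definition Jstar :: "('x \<Rightarrow> 'u \<Rightarrow> 'x) \<Rightarrow> ('x \<Rightarrow> 'u \<Rightarrow> real) \<Rightarrow> 'u set \<Rightarrow> 'x set \<Rightarrow> nat \<Rightarrow> 'x \<Rightarrow> ereal" where
  "Jstar f l U X N x = (INF us \<in> {us. mpc_feasible f U X N x us}. ereal (Jcost f l N x us))"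

definition mpc_optimal :: "('x \<Rightarrow> 'u \<Rightarrow> 'x) \<Rightarrow> ('x \<Rightarrow> 'u \<Rightarrow> real) \<Rightarrow> 'u set \<Rightarrow> 'x set \<Rightarrow> nat \<Rightarrow> 'x \<Rightarrow> (nat \<Rightarrow> 'u) \<Rightarrow> bool" where
  "mpc_optimal f l U X N x us \<longleftrightarrow> mpc_feasible f U X N x us \<and> ereal (Jcost f l N x us) = Jstar f l U X N x"

text \<open>m(x) = min over u in U with f(x,u) in X of l(f(x,u),u) (infimum; \<infinity> if infeasible).\<close>
definition mstage :: "('x \<Rightarrow> 'u \<Rightarrow> 'x) \<Rightarrow> ('x \<Rightarrow> 'u \<Rightarrow> real) \<Rightarrow> 'u set \<Rightarrow> 'x set \<Rightarrow> 'x \<Rightarrow> ereal" where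
  "mstage f l U X x = (INF u \<in> {u \<in> U. f x u \<in> X}. ereal (l (f x u) u))"

definition XT :: "('x \<Rightarrow> 'u \<Rightarrow> 'x) \<Rightarrow> ('x \<Rightarrow> 'u \<Rightarrow> real) \<Rightarrow> 'u set \<Rightarrow> 'x set \<Rightarrow> ereal \<Rightarrow> 'x set" where
  "XT f l U X a = {x \<in> X. mstage f l U X x \<le> a}"

text \<open>A closed-loop trajectory xs of the MPC algorithm, with useq k the optimal input
  sequence computed at time k (useq k i = u*(k+i|k)); includes the hypotheses of the
  theorem: initial feasibility and the terminal condition x*(k+N|k) in X_T(m(x(k))).\<close>
definition mpc_closed_loop ::
  "('x \<Rightarrow> 'u \<Rightarrow> 'x) \<Rightarrow> ('x \<Rightarrow> 'u \<Rightarrow> real) \<Rightarrow> 'u set \<Rightarrow> 'x set \<Rightarrow> nat \<Rightarrow> (nat \<Rightarrow> 'x) \<Rightarrow> (nat \<Rightarrow> nat \<Rightarrow> 'u) \<Rightarrow> bool" where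
  "mpc_closed_loop f l U X N xs useq \<longleftrightarrow>
     xs 0 \<in> X \<and> (\<exists>us. mpc_feasible f U X N (xs 0) us) \<and>
     (\<forall>k. (\<exists>us. mpc_feasible f U X N (xs k) us) \<longrightarrow>
          mpc_optimal f l U X N (xs k) (useq k) \<and>
          xs (Suc k) = f (xs k) (useq k 0) \<and>
          pred_state f (xs k) (useq k) N \<in> XT f l U X (mstage f l U X (xs k)))"

end

theory Submission
  imports Defs
begin

text \<open>The optimal input sequence at time k, shifted by one step and completed by an input u
  that keeps the terminal state in X, is feasible at time k+1 and costs
  J*(x(k)) - l(x(k+1), u(k)) + l(f(x*(k+N|k), u), u). Taking the infimum over u bounds
  J*(x(k+1)) by J*(x(k)) - l(x(k+1), u(k)) + m(x*(k+N|k)); the terminal condition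
  m(x*(k+N|k)) \<le> m(x(k)) \<le> l(x(k+1), u(k)) then makes J* nonincreasing along the closed loop.
  Hence \<alpha>1(|x(k)|) \<le> J*(x(k)) \<le> J*(x(0)) \<le> \<alpha>2(|x(0)|), which gives Lyapunov stability.
  The upper bound on m serves only to make X control invariant (m < \<infinity> on X).\<close>

definition shift_inputs :: "(nat \<Rightarrow> 'u) \<Rightarrow> nat \<Rightarrow> 'u \<Rightarrow> nat \<Rightarrow> 'u" where
  "shift_inputs us M u = (\<lambda>i. if i < M then us (Suc i) else u)"

lemma pred_state_shift_inputs:
  "i \<le> M \<Longrightarrow> pred_state f (f x (us 0)) (shift_inputs us M u) i = pred_state f x us (Suc i)"
  by (induction i) (auto simp: shift_inputs_def)

lemma pred_state_shift_inputs_last: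
  "pred_state f (f x (us 0)) (shift_inputs us M u) (Suc M) = f (pred_state f x us (Suc M)) u"
  using pred_state_shift_inputs[of M M f x us u] by (simp add: shift_inputs_def)

lemma mpc_feasible_shift_inputs:
  assumes "mpc_feasible f U X (Suc M) x us" "u \<in> U" "f (pred_state f x us (Suc M)) u \<in> X"
  shows "mpc_feasible f U X (Suc M) (f x (us 0)) (shift_inputs us M u)"
  unfolding mpc_feasible_def
proof (intro allI impI)
  fix i assume "i < Suc M"
  then consider "i < M" | "i = M" by linarith
  then show "shift_inputs us M u i \<in> U \<and>
      pred_state f (f x (us 0)) (shift_inputs us M u) (Suc i) \<in> X"
  proof cases
    case 1
    then have "pred_state f (f x (us 0)) (shift_inputs us M u) (Suc i) = pred_state f x us (Suc (Suc i))"
      by (intro pred_state_shift_inputs) simp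
    with 1 assms(1) show ?thesis
      unfolding mpc_feasible_def by (simp only: shift_inputs_def if_True)
  next
    case 2
    show ?thesis
      unfolding 2 pred_state_shift_inputs_last using assms by (simp add: shift_inputs_def)
  qed
qed

lemma Jcost_shift_inputs:
  "Jcost f l (Suc M) (f x (us 0)) (shift_inputs us M u)
     = Jcost f l (Suc M) x us - l (f x (us 0)) (us 0) + l (f (pred_state f x us (Suc M)) u) u"
proof -
  have "(\<Sum>i<M. l (pred_state f (f x (us 0)) (shift_inputs us M u) (Suc i)) (shift_inputs us M u i))
      = (\<Sum>i<M. l (pred_state f x us (Suc (Suc i))) (us (Suc i)))"
  proof (intro sum.cong refl)
    fix i assume "i \<in> {..<M}"
    then show "l (pred_state f (f x (us 0)) (shift_inputs us M u) (Suc i)) (shift_inputs us M u i)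
        = l (pred_state f x us (Suc (Suc i))) (us (Suc i))"
      using pred_state_shift_inputs[of "Suc i" M f x us u] by (simp add: shift_inputs_def)
  qed
  moreover have "Jcost f l (Suc M) x us
      = l (f x (us 0)) (us 0) + (\<Sum>i<M. l (pred_state f x us (Suc (Suc i))) (us (Suc i)))"
    unfolding Jcost_def by (subst sum.lessThan_Suc_shift) simp
  ultimately show ?thesis
    unfolding Jcost_def[of f l "Suc M" "f x (us 0)"] sum.lessThan_Suc pred_state_shift_inputs_last
    by (simp add: shift_inputs_def)
qed

lemma Jstar_le_Jcost:
  "mpc_feasible f U X N x us \<Longrightarrow> Jstar f l U X N x \<le> ereal (Jcost f l N x us)"
  unfolding Jstar_def by (auto intro: INF_lower)

lemma mstage_le:
  "u \<in> U \<Longrightarrow> f x u \<in> X \<Longrightarrow> mstage f l U X x \<le> ereal (l (f x u) u)"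
  unfolding mstage_def by (auto intro: INF_lower)

lemma mstage_finite_imp_feasible:
  assumes "mstage f l U X x < \<infinity>"
  obtains u where "u \<in> U" "f x u \<in> X"
proof -
  have "{u \<in> U. f x u \<in> X} \<noteq> {}"
  proof
    assume no_input: "{u \<in> U. f x u \<in> X} = {}"
    have "mstage f l U X x = \<infinity>"
      unfolding mstage_def no_input by (simp add: top_ereal_def)
    with assms show False by simp
  qed
  with that show thesis by blast
qed

lemma Jstar_shift_le:
  assumes "mpc_optimal f l U X (Suc M) x us"
  shows "Jstar f l U X (Suc M) (f x (us 0))
    \<le> ereal (Jcost f l (Suc M) x us - l (f x (us 0)) (us 0)) + mstage f l U X (pred_state f x us (Suc M))"
    (is "?J1 \<le> ereal ?c + mstage f l U X ?xN")
proof -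
  have "?J1 - ereal ?c \<le> ereal (l (f ?xN u) u)" if "u \<in> {u \<in> U. f ?xN u \<in> X}" for u
  proof -
    have "mpc_feasible f U X (Suc M) (f x (us 0)) (shift_inputs us M u)"
      using assms that by (intro mpc_feasible_shift_inputs) (auto simp: mpc_optimal_def)
    then have "?J1 \<le> ereal (?c + l (f ?xN u) u)"
      using Jstar_le_Jcost Jcost_shift_inputs by (metis add_diff_eq)
    then show ?thesis by (simp add: ereal_minus_le_iff add.commute)
  qed
  then have "?J1 - ereal ?c \<le> mstage f l U X ?xN"
    unfolding mstage_def by (rule INF_greatest)
  then show ?thesis by (simp add: ereal_minus_le_iff add.commute)
qed

lemma mpc_closed_loop_step:
  assumes closed_loop: "mpc_closed_loop f l U X (Suc M) xs useq"
    and control_invariant: "\<And>x. x \<in> X \<Longrightarrow> \<exists>u\<in>U. f x u \<in> X"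
    and feasible: "\<exists>us. mpc_feasible f U X (Suc M) (xs k) us"
  shows "\<exists>us. mpc_feasible f U X (Suc M) (xs (Suc k)) us"
    and "xs (Suc k) \<in> X"
    and "Jstar f l U X (Suc M) (xs (Suc k)) \<le> Jstar f l U X (Suc M) (xs k)"
proof -
  let ?us = "useq k"
  let ?xN = "pred_state f (xs k) ?us (Suc M)"
  have optimal: "mpc_optimal f l U X (Suc M) (xs k) ?us"
    and next_state: "xs (Suc k) = f (xs k) (?us 0)"
    and terminal: "?xN \<in> XT f l U X (mstage f l U X (xs k))"
    using closed_loop feasible unfolding mpc_closed_loop_def by auto
  then have feasible_k: "mpc_feasible f U X (Suc M) (xs k) ?us"
    by (simp add: mpc_optimal_def)
  then have first_input: "?us 0 \<in> U" and first_state: "f (xs k) (?us 0) \<in> X"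
    unfolding mpc_feasible_def by auto
  with next_state show "xs (Suc k) \<in> X" by simp
  have "?xN \<in> X" and terminal_decrease: "mstage f l U X ?xN \<le> mstage f l U X (xs k)"
    using terminal unfolding XT_def by auto
  then obtain u where "u \<in> U" "f ?xN u \<in> X"
    using control_invariant by blast
  from mpc_feasible_shift_inputs[OF feasible_k this] next_state
  show "\<exists>us. mpc_feasible f U X (Suc M) (xs (Suc k)) us" by auto
  define c where "c = Jcost f l (Suc M) (xs k) ?us"
  define l0 where "l0 = l (f (xs k) (?us 0)) (?us 0)"
  have "Jstar f l U X (Suc M) (xs (Suc k)) \<le> ereal (c - l0) + mstage f l U X ?xN"
    unfolding next_state c_def l0_def by (rule Jstar_shift_le[OF optimal])
  also have "\<dots> \<le> ereal (c - l0) + mstage f l U X (xs k)"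
    using terminal_decrease by (rule add_left_mono)
  also have "\<dots> \<le> ereal (c - l0) + ereal l0"
    unfolding l0_def using mstage_le[where f = f and x = "xs k", OF first_input first_state]
    by (rule add_left_mono)
  also have "\<dots> = Jstar f l U X (Suc M) (xs k)"
    using optimal by (simp add: mpc_optimal_def c_def)
  finally show "Jstar f l U X (Suc M) (xs (Suc k)) \<le> Jstar f l U X (Suc M) (xs k)" .
qed

lemma mpc_closed_loop_invariant:
  assumes closed_loop: "mpc_closed_loop f l U X (Suc M) xs useq"
    and control_invariant: "\<And>x. x \<in> X \<Longrightarrow> \<exists>u\<in>U. f x u \<in> X"
  shows "(\<exists>us. mpc_feasible f U X (Suc M) (xs k) us) \<and> xs k \<in> X
    \<and> Jstar f l U X (Suc M) (xs k) \<le> Jstar f l U X (Suc M) (xs 0)"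
proof (induction k)
  case 0
  with closed_loop show ?case unfolding mpc_closed_loop_def by auto
next
  case (Suc k)
  then have "\<exists>us. mpc_feasible f U X (Suc M) (xs k) us"
    and "Jstar f l U X (Suc M) (xs k) \<le> Jstar f l U X (Suc M) (xs 0)" by blast+
  with mpc_closed_loop_step[OF closed_loop control_invariant] show ?case
    by (blast intro: order_trans)
qed

lemma classK_stability_radius:
  assumes "classK \<alpha>1" "classK \<alpha>2" "0 < \<epsilon>"
  obtains \<delta> where "0 < \<delta>" "\<And>r s. 0 \<le> r \<Longrightarrow> 0 \<le> s \<Longrightarrow> s < \<delta> \<Longrightarrow> \<alpha>1 r \<le> \<alpha>2 s \<Longrightarrow> r < \<epsilon>"
proof -
  have mono1: "strict_mono_on {0..} \<alpha>1" and "\<alpha>1 0 = 0" "\<alpha>2 0 = 0"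
    and "continuous_on {0..} \<alpha>2"
    using assms(1,2) unfolding classK_def by auto
  then have "\<alpha>1 \<epsilon> > 0"
    using strict_mono_onD[OF mono1, of 0 \<epsilon>] assms(3) by simp
  moreover have "continuous (at 0 within {0..}) \<alpha>2"
    using \<open>continuous_on {0..} \<alpha>2\<close> by (simp add: continuous_on_eq_continuous_within)
  ultimately obtain \<delta> where "0 < \<delta>"
    and close: "\<And>s. s \<in> {0..} \<Longrightarrow> dist s 0 < \<delta> \<Longrightarrow> dist (\<alpha>2 s) (\<alpha>2 0) < \<alpha>1 \<epsilon>"
    unfolding continuous_within_eps_delta by blast
  have small: "\<alpha>2 s < \<alpha>1 \<epsilon>" if "0 \<le> s" "s < \<delta>" for s
    using close[of s] that \<open>\<alpha>2 0 = 0\<close> by (simp add: dist_real_def)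
  show thesis
  proof (rule that[OF \<open>0 < \<delta>\<close>])
    fix r s :: real
    assume "0 \<le> r" "0 \<le> s" "s < \<delta>" "\<alpha>1 r \<le> \<alpha>2 s"
    then have "\<alpha>1 r < \<alpha>1 \<epsilon>" using small by fastforce
    with \<open>0 \<le> r\<close> assms(3) show "r < \<epsilon>"
      using strict_mono_on_leD[OF mono1, of \<epsilon> r] by force
  qed
qed

lemma mpc_closed_loop_stable:
  fixes f :: "'x::real_normed_vector \<Rightarrow> 'u \<Rightarrow> 'x"
  assumes control_invariant: "\<And>x. x \<in> X \<Longrightarrow> \<exists>u\<in>U. f x u \<in> X"
    and value_bounds: "\<And>x. x \<in> X \<Longrightarrow>
      ereal (\<alpha>1 (norm x)) \<le> Jstar f l U X (Suc M) x \<and> Jstar f l U X (Suc M) x \<le> ereal (\<alpha>2 (norm x))"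
    and "classK \<alpha>1" "classK \<alpha>2" "0 < \<epsilon>"
  obtains \<delta> where "0 < \<delta>"
    "\<And>xs useq k. mpc_closed_loop f l U X (Suc M) xs useq \<Longrightarrow> norm (xs 0) < \<delta> \<Longrightarrow> norm (xs k) < \<epsilon>"
proof -
  obtain \<delta> where "0 < \<delta>" and radius:
    "\<And>r s. 0 \<le> r \<Longrightarrow> 0 \<le> s \<Longrightarrow> s < \<delta> \<Longrightarrow> \<alpha>1 r \<le> \<alpha>2 s \<Longrightarrow> r < \<epsilon>"
    using classK_stability_radius assms(3-5) by blast
  show thesis
  proof (rule that[OF \<open>0 < \<delta>\<close>])
    fix xs useq k
    assume closed_loop: "mpc_closed_loop f l U X (Suc M) xs useq" and "norm (xs 0) < \<delta>"
    have "xs k \<in> X" "xs 0 \<in> X"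
      and decrease: "Jstar f l U X (Suc M) (xs k) \<le> Jstar f l U X (Suc M) (xs 0)"
      using mpc_closed_loop_invariant[OF closed_loop control_invariant, of k]
        mpc_closed_loop_invariant[OF closed_loop control_invariant, of 0] by auto
    then have "ereal (\<alpha>1 (norm (xs k))) \<le> Jstar f l U X (Suc M) (xs k)"
      and "Jstar f l U X (Suc M) (xs 0) \<le> ereal (\<alpha>2 (norm (xs 0)))"
      using value_bounds by blast+
    with decrease have "ereal (\<alpha>1 (norm (xs k))) \<le> ereal (\<alpha>2 (norm (xs 0)))"
      by (blast intro: order_trans)
    with \<open>norm (xs 0) < \<delta>\<close> show "norm (xs k) < \<epsilon>" by (intro radius) simp_all
  qed
qed

theorem theorem8:
  fixes f :: "real ^ 'n \<Rightarrow> real ^ 'm \<Rightarrow> real ^ 'n"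
    and l :: "real ^ 'n \<Rightarrow> real ^ 'm \<Rightarrow> real"
    and ubar :: "real ^ 'm"
    and X :: "(real ^ 'n) set"
    and N :: nat
    and \<alpha>1 \<alpha>2 :: "real \<Rightarrow> real"
  defines "U \<equiv> input_box ubar"
  assumes f0: "f 0 0 = 0"
    and X0: "0 \<in> X"
    and N1: "N \<ge> 1"
    and K1: "classKinf \<alpha>1" and K2: "classKinf \<alpha>2"
    and Jbnd: "\<forall>x\<in>X. ereal (\<alpha>1 (norm x)) \<le> Jstar f l U X N x \<and> Jstar f l U X N x \<le> ereal (\<alpha>2 (norm x))"
    and mbnd: "\<forall>x\<in>X. ereal (\<alpha>1 (norm x)) \<le> mstage f l U X x \<and> mstage f l U X x \<le> ereal (\<alpha>2 (norm x))"
  shows "(\<forall>xs useq. mpc_closed_loop f l U X N xs useq \<longrightarrow>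
            (\<forall>k. \<exists>us. mpc_feasible f U X N (xs k) us))
       \<and> (\<forall>\<epsilon>>0. \<exists>\<delta>>0. \<forall>xs useq. mpc_closed_loop f l U X N xs useq \<and> norm (xs 0) < \<delta> \<longrightarrow>
            (\<forall>k. norm (xs k) < \<epsilon>))"
proof -
  obtain M where N: "N = Suc M" using N1 by (cases N) auto
  have control_invariant: "\<exists>u\<in>U. f x u \<in> X" if "x \<in> X" for x
  proof -
    have "mstage f l U X x \<le> ereal (\<alpha>2 (norm x))"
      using mbnd that by blast
    then have "mstage f l U X x < \<infinity>"
      by (rule order.strict_trans1) simp
    then show ?thesis by (rule mstage_finite_imp_feasible) blast
  qed
  have "classK \<alpha>1" "classK \<alpha>2"
    using K1 K2 unfolding classKinf_def by blast+
  show ?thesis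
  proof (intro conjI allI impI)
    fix \<epsilon> :: real assume "\<epsilon> > 0"
    then obtain \<delta> where "0 < \<delta>"
      and "\<And>xs useq k. mpc_closed_loop f l U X N xs useq \<Longrightarrow> norm (xs 0) < \<delta> \<Longrightarrow> norm (xs k) < \<epsilon>"
      using mpc_closed_loop_stable[where f = f and l = l and M = M, folded N,
          OF control_invariant _ \<open>classK \<alpha>1\<close> \<open>classK \<alpha>2\<close>] Jbnd
      by blast
    then show "\<exists>\<delta>>0. \<forall>xs useq. mpc_closed_loop f l U X N xs useq \<and> norm (xs 0) < \<delta> \<longrightarrow>
        (\<forall>k. norm (xs k) < \<epsilon>)"
      by blast
  qed (use mpc_closed_loop_invariant[where f = f and l = l and M = M, folded N,
      OF _ control_invariant] in blast)
qed

end
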